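(* Let $\boldsymbol{\Sigma}$ be symmetric positive definite on $\mathbb{R}^d$ with extreme eigenvalues $\lambda_{\max},\lambda_{\min}$, let $f(\mathbf{x})=\mathrm{pos}(\mathbf{r}_*^{\mathsf T}\mathbf{x})$ with $\|\mathbf{r}_*\|_2=1$, $q\ge2$ and $k\in\{1,\dots,q-1\}$ with $k\neq q/2$. Let $\varepsilon,\delta\in(0,1)$ and let $\hat{\mathbf{r}}$ be a unit vector with $\min\{\|\hat{\mathbf{r}}-\mathbf{r}_*\|_2,\|\hat{\mathbf{r}}+\mathbf{r}_*\|_2\}\le\varepsilon$. Let $h(\mathbf{x})=\mathrm{pos}(\hat{\mathbf{r}}^{\mathsf T}\mathbf{x})$, $\tilde h(\mathbf{x})=\mathrm{pos}(-\hat{\mathbf{r}}^{\mathsf T}\mathbf{x})$, let $\mathcal{M}$ be a collection of $s$ bags sampled i.i.d. from $\mathrm{Ex}(f,N(\mathbf{0},\boldsymbol{\Sigma}),q,k)$ (independently of $\hat{\mathbf{r}}$), and let $h^*\in\{h,\tilde h\}$ be the one with lower $\mathrm{BagErr}_{\mathrm{sample}}(\cdot,\mathcal{M})$. Then there are absolute constants $C,c_0>0$ such that if $s\ge Cd(\log q+\log(1/\delta))/\varepsilon^2$, with probability at least $1-\delta/2$, $\Pr_{\mathbf{x}\sim N(\mathbf{0},\boldsymbol{\Sigma})}[h^*(\mathbf{x})\neq f(\mathbf{x})]\le16c_0q\varepsilon\sqrt{\lambda_{\max}/\lambda_{\min}}$.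
   Context: $\mathrm{pos}(a)=1$ if $a>0$, else $0$. The bag oracle $\mathrm{Ex}(f,\mathcal{D},q,k)$ returns a bag $B$ of $q$ independent points, $k$ drawn from $\mathcal{D}$ conditioned on $f=1$ and $q-k$ from $\mathcal{D}$ conditioned on $f=0$. $\mathrm{BagErr}_{\mathrm{sample}}(h,\mathcal{M}):=|\{B\in\mathcal{M}:\mathrm{Avg}\{h(\mathbf{x}):\mathbf{x}\in B\}\neq k/q\}|/|\mathcal{M}|$. *)

theory Defs
  imports "HOL-Probability.Probability"
begin

text \<open>Vectors in R^d are functions nat => real, only components i < d matter.
  Matrices are nat => nat => real, only entries i, j < d matter.\<close>

definition pos :: "real \<Rightarrow> real" where
  "pos a = (if a > 0 then 1 else 0)"

definition dotp :: "nat \<Rightarrow> (nat \<Rightarrow> real) \<Rightarrow> (nat \<Rightarrow> real) \<Rightarrow> real" where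
  "dotp d a x = (\<Sum>i<d. a i * x i)"

definition vnorm :: "nat \<Rightarrow> (nat \<Rightarrow> real) \<Rightarrow> real" where
  "vnorm d v = sqrt (\<Sum>i<d. (v i)^2)"

definition quadf :: "nat \<Rightarrow> (nat \<Rightarrow> nat \<Rightarrow> real) \<Rightarrow> (nat \<Rightarrow> real) \<Rightarrow> real" where
  "quadf d S a = (\<Sum>i<d. \<Sum>j<d. a i * S i j * a j)"

definition sym_mat :: "nat \<Rightarrow> (nat \<Rightarrow> nat \<Rightarrow> real) \<Rightarrow> bool" where
  "sym_mat d S \<longleftrightarrow> (\<forall>i<d. \<forall>j<d. S i j = S j i)"

definition posdef :: "nat \<Rightarrow> (nat \<Rightarrow> nat \<Rightarrow> real) \<Rightarrow> bool" where
  "posdef d S \<longleftrightarrow> (\<forall>x. (\<exists>i<d. x i \<noteq> 0) \<longrightarrow> quadf d S x > 0)"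

definition is_eigenvalue :: "nat \<Rightarrow> (nat \<Rightarrow> nat \<Rightarrow> real) \<Rightarrow> real \<Rightarrow> bool" where
  "is_eigenvalue d S lam \<longleftrightarrow>
     (\<exists>v. (\<exists>i<d. v i \<noteq> 0) \<and> (\<forall>i<d. (\<Sum>j<d. S i j * v j) = lam * v i))"

text \<open>mu is the multivariate Gaussian N(0,S) on R^d (as a measure on PiM {..<d} borel):
  every linear functional a^T x is distributed as N(0, a^T S a).\<close>
definition gaussian :: "nat \<Rightarrow> (nat \<Rightarrow> nat \<Rightarrow> real) \<Rightarrow> (nat \<Rightarrow> real) measure \<Rightarrow> bool" where
  "gaussian d S mu \<longleftrightarrow> prob_space mu \<and>
     sets mu = sets (PiM {..<d} (\<lambda>_. borel :: real measure)) \<and>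
     (\<forall>a. quadf d S a > 0 \<longrightarrow>
        distr mu borel (dotp d a) = density lborel (normal_density 0 (sqrt (quadf d S a))))"

definition bag_oracle :: "('b \<Rightarrow> real) \<Rightarrow> 'b measure \<Rightarrow> nat \<Rightarrow> nat \<Rightarrow> (nat \<Rightarrow> 'b) measure" where
  "bag_oracle f D q k = PiM {..<q} (\<lambda>j. if j < k then uniform_measure D {x \<in> space D. f x = 1}
                                               else uniform_measure D {x \<in> space D. f x = 0})"

definition bag_err_sample :: "('b \<Rightarrow> real) \<Rightarrow> nat \<Rightarrow> nat \<Rightarrow> nat \<Rightarrow> (nat \<Rightarrow> nat \<Rightarrow> 'b) \<Rightarrow> real" where
  "bag_err_sample h q k s M =
     real (card {i \<in> {..<s}. (\<Sum>j<q. h (M i j)) / real q \<noteq> real k / real q}) / real s"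

end

theory Submission
  imports Defs
begin

(* Orient the estimate rh so that |rh - rs| <= eps.  The halfspaces of rh and rs can only
   disagree where one of the Gaussian functionals rh x, rs x is small, or where the triangle
   defect |rh x| + |rs x| - |(rh + rs) x| is large; the defect has mean
   sqrt(2/pi) (|rh|_S + |rs|_S - |rh + rs|_S) = O(|rh - rs|_S^2), so Markov's inequality
   bounds the disagreement by O(eps sqrt(lmax/lmin)).
   Once this error is below 1/(128 q), a bag from the oracle is labelled exactly by rh with
   probability at least 63/64, and on such a bag the flipped classifier has label proportion
   (q - k)/q, which differs from k/q.  So the flipped classifier wins or ties the sample
   comparison only if half of the s bags are bad, which has probability at most
   2^s 64^(-s/2) = 4^(-s) <= delta/2 for the stated sample size.  If the error is larger,
   the claimed bound exceeds 1. *)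

section \<open>Quadratic forms and extreme eigenvalues\<close>

definition sqnorm :: "nat \<Rightarrow> (nat \<Rightarrow> real) \<Rightarrow> real" where
  "sqnorm d v = (\<Sum>i<d. (v i)^2)"

lemma sqnorm_nonneg: "0 \<le> sqnorm d v"
  unfolding sqnorm_def by (simp add: sum_nonneg)

lemma vnorm_power2: "(vnorm d v)^2 = sqnorm d v"
  unfolding vnorm_def sqnorm_def by (simp add: sum_nonneg)

lemma sqnorm_eq_0_iff: "sqnorm d v = 0 \<longleftrightarrow> (\<forall>i<d. v i = 0)"
  unfolding sqnorm_def by (subst sum_nonneg_eq_0_iff) auto

lemma sqnorm_cong: "(\<And>i. i < d \<Longrightarrow> v i = w i) \<Longrightarrow> sqnorm d v = sqnorm d w"
  unfolding sqnorm_def by (intro sum.cong refl) auto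

lemma quadf_cong: "(\<And>i. i < d \<Longrightarrow> v i = w i) \<Longrightarrow> quadf d S v = quadf d S w"
  unfolding quadf_def by (intro sum.cong refl) auto

lemma sqnorm_scale: "sqnorm d (\<lambda>i. c * w i) = c^2 * sqnorm d w"
  unfolding sqnorm_def by (simp add: sum_distrib_left power_mult_distrib)

lemma quadf_scale: "quadf d S (\<lambda>i. c * w i) = c^2 * quadf d S w"
  unfolding quadf_def by (simp add: sum_distrib_left power2_eq_square algebra_simps)

lemma quadf_uminus: "quadf d S (\<lambda>i. - w i) = quadf d S w"
  unfolding quadf_def by simp

lemma quadf_uminus_matrix: "quadf d (\<lambda>i j. - S i j) w = - quadf d S w"
  unfolding quadf_def by (simp add: sum_negf)

lemma dotp_add: "dotp d (\<lambda>i. a i + b i) x = dotp d a x + dotp d b x"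
  unfolding dotp_def by (simp add: distrib_right sum.distrib)

lemma dotp_minus: "dotp d (\<lambda>i. - a i) x = - dotp d a x"
  unfolding dotp_def by (simp add: sum_negf)

lemma vnorm_diff_commute: "vnorm d (\<lambda>i. a i - b i) = vnorm d (\<lambda>i. b i - a i)"
  unfolding vnorm_def by (simp add: power2_commute)

lemma sqnorm_add_scaled:
  "sqnorm d (\<lambda>i. v i + t * w i) = sqnorm d v + 2 * t * (\<Sum>i<d. v i * w i) + t^2 * sqnorm d w"
  unfolding sqnorm_def
  by (simp add: sum.distrib sum_distrib_left algebra_simps power2_eq_square)

lemma quadf_add_scaled:
  assumes "sym_mat d S"
  shows "quadf d S (\<lambda>i. v i + t * w i) =
    quadf d S v + 2 * t * (\<Sum>i<d. w i * (\<Sum>j<d. S i j * v j)) + t^2 * quadf d S w"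
proof -
  have "(\<Sum>i<d. \<Sum>j<d. v i * S i j * w j) = (\<Sum>j<d. \<Sum>i<d. v i * S i j * w j)"
    by (rule sum.swap)
  also have "\<dots> = (\<Sum>j<d. w j * (\<Sum>i<d. S j i * v i))"
    using assms unfolding sym_mat_def
    by (intro sum.cong refl) (auto simp: sum_distrib_left mult_ac)
  finally have cross: "(\<Sum>i<d. \<Sum>j<d. v i * S i j * w j) = (\<Sum>i<d. w i * (\<Sum>j<d. S i j * v j))" .
  have "quadf d S (\<lambda>i. v i + t * w i) =
    (\<Sum>i<d. \<Sum>j<d. v i * S i j * v j) + t * (\<Sum>i<d. \<Sum>j<d. v i * S i j * w j)
      + t * (\<Sum>i<d. \<Sum>j<d. w i * S i j * v j) + t^2 * (\<Sum>i<d. \<Sum>j<d. w i * S i j * w j)"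
    unfolding quadf_def
    by (simp add: sum.distrib sum_distrib_left algebra_simps power2_eq_square)
  also have "(\<Sum>i<d. \<Sum>j<d. w i * S i j * v j) = (\<Sum>i<d. w i * (\<Sum>j<d. S i j * v j))"
    by (simp add: sum_distrib_left mult_ac)
  finally show ?thesis using cross unfolding quadf_def by simp
qed

lemma quadf_parallelogram:
  "quadf d S (\<lambda>i. a i + b i) + quadf d S (\<lambda>i. a i - b i) = 2 * quadf d S a + 2 * quadf d S b"
  unfolding quadf_def
  by (simp add: sum.distrib[symmetric] sum_distrib_left algebra_simps)

lemma quadf_nonneg_if_posdef: "posdef d S \<Longrightarrow> 0 \<le> quadf d S w"
  unfolding posdef_def quadf_def by (cases "\<exists>i<d. w i \<noteq> 0") (auto simp: less_imp_le)

lemma posdef_quadf_eq_0: "posdef d S \<Longrightarrow> quadf d S w = 0 \<Longrightarrow> \<forall>i<d. w i = 0"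
  unfolding posdef_def by force

lemma eigenvalue_pos_if_posdef:
  assumes "posdef d S" and "is_eigenvalue d S l"
  shows "0 < l"
proof -
  obtain v where v: "\<exists>i<d. v i \<noteq> 0" "\<forall>i<d. (\<Sum>j<d. S i j * v j) = l * v i"
    using assms(2) unfolding is_eigenvalue_def by blast
  have "quadf d S v = (\<Sum>i<d. v i * (\<Sum>j<d. S i j * v j))"
    unfolding quadf_def by (simp add: sum_distrib_left mult_ac)
  also have "\<dots> = l * sqnorm d v"
    using v(2) unfolding sqnorm_def by (simp add: sum_distrib_left power2_eq_square mult_ac)
  finally have "0 < l * sqnorm d v" using assms(1) v(1) unfolding posdef_def by auto
  then show ?thesis using sqnorm_nonneg[of d v] by (simp add: zero_less_mult_iff)
qed

text \<open>Coordinates from \<open>d\<close> on are pinned to \<open>0\<close>, so the sphere is compact in the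
  product topology on \<open>nat \<Rightarrow> real\<close>.\<close>
lemma compact_unit_sphere:
  "compact {v::nat\<Rightarrow>real. v \<in> PiE UNIV (\<lambda>i. if i < d then {-1..1} else {0}) \<and> sqnorm d v = 1}"
proof -
  have "compactin (product_topology (\<lambda>i. euclidean) UNIV)
          (PiE UNIV (\<lambda>i::nat. if i < d then {-1..1::real} else {0}))"
    by (subst compactin_PiE) auto
  then have box: "compact (PiE UNIV (\<lambda>i::nat. if i < d then {-1..1::real} else {0}))"
    by (simp add: euclidean_product_topology compactin_euclidean_iff)
  have "continuous_on UNIV (\<lambda>v::nat\<Rightarrow>real. sqnorm d v)"
    unfolding sqnorm_def
    by (intro continuous_intros continuous_on_product_then_coordinatewise continuous_on_id)
  then have "closed {v::nat\<Rightarrow>real. sqnorm d v = 1}"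
    using closed_Collect_eq[OF _ continuous_on_const] by simp
  from compact_Int_closed[OF box this] show ?thesis
    by (simp add: Int_def conj_commute)
qed

lemma quadf_attains_min_on_sphere:
  assumes "0 < d"
  shows "\<exists>v. sqnorm d v = 1 \<and> (\<forall>w. quadf d S v * sqnorm d w \<le> quadf d S w)"
proof -
  define K where "K = {v::nat\<Rightarrow>real. v \<in> PiE UNIV (\<lambda>i. if i < d then {-1..1} else {0}) \<and> sqnorm d v = 1}"
  have "(\<lambda>i. if i = 0 then 1 else 0) \<in> K"
    using assms unfolding K_def sqnorm_def
    by (auto simp: PiE_iff if_distrib[of "\<lambda>x. x^2"] sum.delta' cong: if_cong)
  moreover have "continuous_on K (quadf d S)"
    unfolding quadf_def
    by (intro continuous_intros continuous_on_product_then_coordinatewise continuous_on_id)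
  ultimately obtain v where vK: "v \<in> K" and vmin: "\<And>y. y \<in> K \<Longrightarrow> quadf d S v \<le> quadf d S y"
    using continuous_attains_inf[OF compact_unit_sphere[of d, folded K_def]] by (metis empty_iff)
  have "quadf d S v * sqnorm d w \<le> quadf d S w" for w
  proof (cases "sqnorm d w = 0")
    case True
    then have "quadf d S w = 0" by (simp add: sqnorm_eq_0_iff quadf_def)
    with True show ?thesis by simp
  next
    case False
    then have pos: "sqnorm d w > 0" using sqnorm_nonneg[of d w] by linarith
    define c where "c = 1 / sqrt (sqnorm d w)"
    define u where "u = (\<lambda>i. if i < d then c * w i else 0)"
    have c2: "c^2 * sqnorm d w = 1" using pos unfolding c_def by (simp add: power_divide)
    have su: "sqnorm d u = 1"
      using c2 by (subst sqnorm_cong[of d u "\<lambda>i. c * w i"]) (simp_all add: u_def sqnorm_scale)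
    have qu: "quadf d S u = c^2 * quadf d S w"
      by (subst quadf_cong[of d u "\<lambda>i. c * w i"]) (simp_all add: u_def quadf_scale)
    have "u i \<in> {-1..1}" if "i < d" for i
    proof -
      have "(u i)^2 \<le> sqnorm d u"
        unfolding sqnorm_def using that by (intro member_le_sum) auto
      then show ?thesis using su abs_le_square_iff[of "u i" 1] by auto
    qed
    then have "u \<in> K" unfolding K_def using su by (auto simp: PiE_iff u_def)
    then have "quadf d S v \<le> c^2 * quadf d S w" using vmin unfolding qu[symmetric] by blast
    then have "quadf d S v * sqnorm d w \<le> c^2 * quadf d S w * sqnorm d w"
      using pos by (simp add: mult_right_mono)
    also have "\<dots> = quadf d S w" using c2 by (simp add: mult_ac)
    finally show ?thesis .
  qed
  then show ?thesis using vK unfolding K_def by auto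
qed

text \<open>A minimiser of the Rayleigh quotient is an eigenvector: perturbing it by \<open>t\<close> times
  its residual \<open>r = S v - m v\<close> changes the quotient by \<open>2 t |r|\<^sup>2 + O(t\<^sup>2)\<close>,
  which must not become negative.\<close>
lemma rayleigh_minimizer_is_eigenvalue:
  assumes sym: "sym_mat d S" and v1: "sqnorm d v = 1"
    and vmin: "\<forall>w. quadf d S v * sqnorm d w \<le> quadf d S w"
  shows "is_eigenvalue d S (quadf d S v)"
proof -
  define m where "m = quadf d S v"
  define r where "r = (\<lambda>i. (\<Sum>j<d. S i j * v j) - m * v i)"
  define R where "R = sqnorm d r"
  define K where "K = quadf d S r - m * sqnorm d r"
  have perturb: "0 \<le> 2 * t * R + t^2 * K" for t
  proof -
    have "m * sqnorm d (\<lambda>i. v i + t * r i) \<le> quadf d S (\<lambda>i. v i + t * r i)"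
      using vmin m_def by auto
    then have "m * (1 + 2 * t * (\<Sum>i<d. v i * r i) + t^2 * sqnorm d r)
       \<le> m + 2 * t * (\<Sum>i<d. r i * (\<Sum>j<d. S i j * v j)) + t^2 * quadf d S r"
      using quadf_add_scaled[OF sym, of v t r] sqnorm_add_scaled[of d v t r] v1 m_def by simp
    moreover have "(\<Sum>i<d. r i * (\<Sum>j<d. S i j * v j)) - m * (\<Sum>i<d. v i * r i) = R"
      unfolding R_def sqnorm_def r_def
      by (simp add: sum_distrib_left sum_subtractf[symmetric] power2_eq_square algebra_simps)
    ultimately show ?thesis unfolding K_def by (simp add: algebra_simps)
  qed
  have "R = 0"
  proof (rule ccontr)
    assume "R \<noteq> 0"
    then have Rp: "R > 0" using sqnorm_nonneg[of d r] R_def by linarith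
    define A where "A = \<bar>K\<bar> + 1"
    have A: "0 < A" "K \<le> A" unfolding A_def by auto
    have "(- R / A)^2 * K \<le> (- R / A)^2 * A" using A by (intro mult_left_mono) auto
    moreover have "(- R / A)^2 * A = R * R / A" "2 * (- R / A) * R = - 2 * (R * R / A)"
      using A by (simp_all add: power2_eq_square)
    moreover have "R * R / A > 0" using Rp A by simp
    ultimately show False using perturb[of "- R / A"] by linarith
  qed
  then have "\<forall>i<d. r i = 0" unfolding R_def by (simp add: sqnorm_eq_0_iff)
  moreover have "\<exists>i<d. v i \<noteq> 0" using v1 sqnorm_eq_0_iff[of d v] by auto
  ultimately show ?thesis unfolding is_eigenvalue_def m_def[symmetric] r_def by auto
qed

lemma min_eigenvalue_le_quadf:
  assumes "sym_mat d S" "0 < d" "\<forall>l. is_eigenvalue d S l \<longrightarrow> lmin \<le> l"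
  shows "lmin * sqnorm d w \<le> quadf d S w"
proof -
  obtain v where v: "sqnorm d v = 1" "\<forall>w. quadf d S v * sqnorm d w \<le> quadf d S w"
    using quadf_attains_min_on_sphere[OF assms(2)] by blast
  have "lmin \<le> quadf d S v" using assms(3) rayleigh_minimizer_is_eigenvalue[OF assms(1) v] by blast
  then have "lmin * sqnorm d w \<le> quadf d S v * sqnorm d w"
    by (intro mult_right_mono sqnorm_nonneg)
  then show ?thesis using v(2) by (meson order_trans)
qed

lemma quadf_le_max_eigenvalue:
  assumes sym: "sym_mat d S" and "0 < d" and emax: "\<forall>l. is_eigenvalue d S l \<longrightarrow> l \<le> lmax"
  shows "quadf d S w \<le> lmax * sqnorm d w"
proof -
  have "sym_mat d (\<lambda>i j. - S i j)" using sym unfolding sym_mat_def by auto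
  moreover have "- lmax \<le> l" if ev: "is_eigenvalue d (\<lambda>i j. - S i j) l" for l
  proof -
    obtain v where "\<exists>i<d. v i \<noteq> 0" "\<forall>i<d. (\<Sum>j<d. - S i j * v j) = l * v i"
      using ev unfolding is_eigenvalue_def by blast
    then have "is_eigenvalue d S (- l)"
      unfolding is_eigenvalue_def by (intro exI[of _ v]) (auto simp: sum_negf minus_equation_iff)
    then show ?thesis using emax by fastforce
  qed
  ultimately have "- lmax * sqnorm d w \<le> quadf d (\<lambda>i j. - S i j) w"
    using min_eigenvalue_le_quadf[OF _ assms(2)] by blast
  then show ?thesis by (simp add: quadf_uminus_matrix)
qed

section \<open>Linear functionals of a Gaussian vector\<close>

lemma measurable_dotp_gaussian:
  assumes "gaussian d S mu" shows "dotp d c \<in> borel_measurable mu"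
proof -
  have "dotp d c \<in> borel_measurable (PiM {..<d} (\<lambda>_. borel :: real measure))"
    unfolding dotp_def by measurable
  then show ?thesis
    using assms unfolding gaussian_def by (metis measurable_cong_sets)
qed

lemma pos_measurable[measurable]: "pos \<in> borel_measurable borel"
  unfolding pos_def by measurable

lemma gaussian_distr_dotp:
  "gaussian d S mu \<Longrightarrow> 0 < quadf d S c \<Longrightarrow>
    distr mu borel (dotp d c) = density lborel (normal_density 0 (sqrt (quadf d S c)))"
  unfolding gaussian_def by blast

lemma normal_density_le:
  assumes "0 < \<sigma>" shows "normal_density 0 \<sigma> x \<le> 1 / (2 * \<sigma>)"
proof -
  have "(2 * \<sigma>)^2 \<le> 2 * pi * \<sigma>\<^sup>2" using pi_gt3 assms
    by (simp add: power_mult_distrib mult_right_mono)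
  then have "2 * \<sigma> \<le> sqrt (2 * pi * \<sigma>\<^sup>2)" using assms by (metis real_le_rsqrt)
  moreover have "exp (-(x - 0)\<^sup>2/ (2 * \<sigma>\<^sup>2)) \<le> 1" by simp
  ultimately have "1 / sqrt (2 * pi * \<sigma>\<^sup>2) * exp (-(x - 0)\<^sup>2/ (2 * \<sigma>\<^sup>2)) \<le> 1 / (2 * \<sigma>) * 1"
    using assms by (intro mult_mono) (auto simp: frac_le)
  then show ?thesis unfolding normal_density_def by simp
qed

lemma gaussian_small_ball:
  assumes g: "gaussian d S mu" and qc: "0 < quadf d S c" and "0 < \<tau>"
  shows "measure mu {x \<in> space mu. \<bar>dotp d c x\<bar> < \<tau>} \<le> \<tau> / sqrt (quadf d S c)"
proof -
  define \<sigma> where "\<sigma> = sqrt (quadf d S c)"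
  have "0 < \<sigma>" using qc unfolding \<sigma>_def by simp
  have "emeasure (density lborel (normal_density 0 \<sigma>)) {-\<tau><..<\<tau>}
      = (\<integral>\<^sup>+ x. ennreal (normal_density 0 \<sigma> x) * indicator {-\<tau><..<\<tau>} x \<partial>lborel)"
    by (rule emeasure_density) auto
  also have "\<dots> \<le> (\<integral>\<^sup>+ x. ennreal (1 / (2 * \<sigma>)) * indicator {-\<tau><..<\<tau>} x \<partial>lborel)"
    using \<open>0 < \<sigma>\<close> by (intro nn_integral_mono mult_right_mono ennreal_leI normal_density_le) auto
  also have "\<dots> = ennreal (1 / (2 * \<sigma>)) * ennreal (2 * \<tau>)"
    using \<open>0 < \<tau>\<close> by (simp add: nn_integral_cmult_indicator)
  also have "\<dots> = ennreal (\<tau> / \<sigma>)"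
    using \<open>0 < \<tau>\<close> \<open>0 < \<sigma>\<close> by (simp add: ennreal_mult[symmetric])
  finally have "measure (density lborel (normal_density 0 \<sigma>)) {-\<tau><..<\<tau>} \<le> \<tau> / \<sigma>"
    using \<open>0 < \<tau>\<close> \<open>0 < \<sigma>\<close> unfolding measure_def by (simp add: enn2real_leI)
  moreover have "{x \<in> space mu. \<bar>dotp d c x\<bar> < \<tau>} = dotp d c -` {-\<tau><..<\<tau>} \<inter> space mu"
    by auto
  ultimately show ?thesis
    using measure_distr[OF measurable_dotp_gaussian[OF g, of c], of "{-\<tau><..<\<tau>}"]
    by (simp add: gaussian_distr_dotp[OF g qc] \<sigma>_def)
qed

text \<open>For a degenerate direction (\<open>quadf d S c = 0\<close>) positive definiteness makes the
  functional vanish identically, so the formula still holds.\<close>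
lemma gaussian_abs_dotp:
  assumes g: "gaussian d S mu" and pd: "posdef d S"
  shows "integrable mu (\<lambda>x. \<bar>dotp d c x\<bar>)"
    and "(\<integral>x. \<bar>dotp d c x\<bar> \<partial>mu) = sqrt (quadf d S c) * sqrt (2 / pi)"
proof -
  have "integrable mu (\<lambda>x. \<bar>dotp d c x\<bar>) \<and>
      (\<integral>x. \<bar>dotp d c x\<bar> \<partial>mu) = sqrt (quadf d S c) * sqrt (2 / pi)"
  proof (cases "quadf d S c = 0")
    case True
    then have "dotp d c x = 0" for x
      using posdef_quadf_eq_0[OF pd True] unfolding dotp_def by simp
    with True show ?thesis by simp
  next
    case False
    then have qc: "0 < quadf d S c" using quadf_nonneg_if_posdef[OF pd, of c] by simp
    define \<sigma> where "\<sigma> = sqrt (quadf d S c)"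
    have meas: "dotp d c \<in> borel_measurable mu" using measurable_dotp_gaussian[OF g] .
    have "has_bochner_integral lborel (\<lambda>x. normal_density 0 \<sigma> x *\<^sub>R \<bar>x\<bar>) (\<sigma> * sqrt (2 / pi))"
      using normal_moment_abs_odd[of \<sigma> 0 0] qc unfolding \<sigma>_def by simp
    then have "has_bochner_integral (distr mu borel (dotp d c)) abs (\<sigma> * sqrt (2 / pi))"
      unfolding gaussian_distr_dotp[OF g qc, folded \<sigma>_def]
      by (intro has_bochner_integral_density) auto
    then show ?thesis
      using integrable_distr_eq[OF meas, of abs] integral_distr[OF meas, of abs]
      by (simp add: has_bochner_integral_iff \<sigma>_def)
  qed
  then show "integrable mu (\<lambda>x. \<bar>dotp d c x\<bar>)"
    and "(\<integral>x. \<bar>dotp d c x\<bar> \<partial>mu) = sqrt (quadf d S c) * sqrt (2 / pi)" by auto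
qed

lemma gaussian_dotp_eq_0:
  assumes g: "gaussian d S mu" and qc: "0 < quadf d S c"
  shows "measure mu {x \<in> space mu. dotp d c x = 0} = 0"
proof -
  interpret prob_space mu using g unfolding gaussian_def by simp
  have [measurable]: "dotp d c \<in> borel_measurable mu" using measurable_dotp_gaussian[OF g] .
  have "measure mu {x \<in> space mu. dotp d c x = 0} \<le> t / sqrt (quadf d S c)" if "0 < t" for t
  proof -
    have "measure mu {x \<in> space mu. dotp d c x = 0} \<le> measure mu {x \<in> space mu. \<bar>dotp d c x\<bar> < t}"
      by (rule finite_measure_mono) (use that in auto)
    also have "\<dots> \<le> t / sqrt (quadf d S c)" using gaussian_small_ball[OF g qc that] .
    finally show ?thesis .
  qed
  note bound = this
  have "measure mu {x \<in> space mu. dotp d c x = 0} \<le> 0 + e" if "0 < e" for e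
    using bound[of "e * sqrt (quadf d S c)"] that qc by simp
  then have "measure mu {x \<in> space mu. dotp d c x = 0} \<le> 0"
    by (rule field_le_epsilon)
  then show ?thesis using measure_nonneg[of mu "{x \<in> space mu. dotp d c x = 0}"] by linarith
qed

lemma gaussian_dotp_pos:
  assumes g: "gaussian d S mu" and qc: "0 < quadf d S c"
  shows "measure mu {x \<in> space mu. dotp d c x > 0} = 1/2"
    and "measure mu {x \<in> space mu. \<not> dotp d c x > 0} = 1/2"
proof -
  interpret prob_space mu using g unfolding gaussian_def by simp
  have [measurable]: "dotp d c \<in> borel_measurable mu" "dotp d (\<lambda>i. - c i) \<in> borel_measurable mu"
    using measurable_dotp_gaussian[OF g] by auto
  have "measure mu {x \<in> space mu. dotp d c x > 0} = measure (distr mu borel (dotp d c)) {0<..}"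
    by (subst measure_distr) (auto intro!: arg_cong[where f="measure mu"])
  also have "\<dots> = measure (distr mu borel (dotp d (\<lambda>i. - c i))) {0<..}"
    using qc by (simp add: gaussian_distr_dotp[OF g] quadf_uminus)
  also have "\<dots> = measure mu {x \<in> space mu. dotp d c x < 0}"
    by (subst measure_distr) (auto intro!: arg_cong[where f="measure mu"] simp: dotp_minus)
  finally have sym: "measure mu {x \<in> space mu. dotp d c x > 0} = measure mu {x \<in> space mu. dotp d c x < 0}" .
  have "measure mu {x \<in> space mu. \<not> dotp d c x > 0}
      = measure mu ({x \<in> space mu. dotp d c x < 0} \<union> {x \<in> space mu. dotp d c x = 0})"
    by (intro arg_cong[where f="measure mu"]) auto
  also have "\<dots> = measure mu {x \<in> space mu. dotp d c x < 0} + measure mu {x \<in> space mu. dotp d c x = 0}"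
    by (rule finite_measure_Union) (measurable, auto)
  also have "\<dots> = measure mu {x \<in> space mu. dotp d c x < 0}"
    using gaussian_dotp_eq_0[OF g qc] by simp
  finally have "measure mu {x \<in> space mu. \<not> dotp d c x > 0} = measure mu {x \<in> space mu. dotp d c x > 0}"
    using sym by simp
  moreover have "measure mu {x \<in> space mu. \<not> dotp d c x > 0}
      = 1 - measure mu {x \<in> space mu. dotp d c x > 0}"
  proof -
    have complement: "space mu - {x \<in> space mu. dotp d c x > 0} = {x \<in> space mu. \<not> dotp d c x > 0}"
      by auto
    have "measure mu (space mu - {x \<in> space mu. dotp d c x > 0})
        = 1 - measure mu {x \<in> space mu. dotp d c x > 0}"
      by (rule prob_compl) measurable
    then show ?thesis unfolding complement .
  qed
  ultimately show "measure mu {x \<in> space mu. dotp d c x > 0} = 1/2"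
    and "measure mu {x \<in> space mu. \<not> dotp d c x > 0} = 1/2" by linarith+
qed

section \<open>Disagreement of two halfspaces\<close>

lemma parallelogram_defect_le:
  fixes A B C Q :: real
  assumes "0 \<le> A" "0 \<le> B" "0 \<le> C" "0 < A + B" "0 \<le> Q" "C^2 = 2*A^2 + 2*B^2 - Q"
  shows "A + B - C \<le> Q / (A + B)"
proof (cases "A + B - C \<le> 0")
  case True
  then show ?thesis using assms(4,5) by (smt (verit) divide_nonneg_pos)
next
  case False
  have "(A + B - C) * (A + B) \<le> (A + B - C) * (A + B + C)"
    using False assms by (intro mult_left_mono) auto
  also have "\<dots> = Q - (A - B)^2" using assms(6) by (simp add: power2_eq_square algebra_simps)
  also have "\<dots> \<le> Q" by simp
  finally show ?thesis using assms by (simp add: field_simps)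
qed

lemma quadf_triangle_defect_le:
  assumes pd: "posdef d S" and "0 < L" "L \<le> quadf d S a" "L \<le> quadf d S b"
  shows "sqrt (quadf d S a) + sqrt (quadf d S b) - sqrt (quadf d S (\<lambda>i. a i + b i))
    \<le> quadf d S (\<lambda>i. a i - b i) / (2 * sqrt L)"
proof -
  have L': "sqrt L \<le> sqrt (quadf d S a)" "sqrt L \<le> sqrt (quadf d S b)" "0 < sqrt L"
    using assms by simp_all
  then have "0 < sqrt (quadf d S a) + sqrt (quadf d S b)" by linarith
  then have "sqrt (quadf d S a) + sqrt (quadf d S b) - sqrt (quadf d S (\<lambda>i. a i + b i))
      \<le> quadf d S (\<lambda>i. a i - b i) / (sqrt (quadf d S a) + sqrt (quadf d S b))"
    using quadf_nonneg_if_posdef[OF pd] quadf_parallelogram[of d S a b]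
    by (intro parallelogram_defect_le) auto
  also have "\<dots> \<le> quadf d S (\<lambda>i. a i - b i) / (2 * sqrt L)"
    by (intro divide_left_mono mult_pos_pos quadf_nonneg_if_posdef[OF pd]) (use L' in linarith)+
  finally show ?thesis .
qed

lemma gaussian_triangle_defect_tail_le:
  assumes g: "gaussian d S mu" and pd: "posdef d S"
    and L: "0 < L" "L \<le> quadf d S a" "L \<le> quadf d S b"
    and E: "0 < E" "quadf d S (\<lambda>i. a i - b i) \<le> E^2"
  shows "measure mu {x \<in> space mu.
    2 * E \<le> \<bar>dotp d a x\<bar> + \<bar>dotp d b x\<bar> - \<bar>dotp d (\<lambda>i. a i + b i) x\<bar>} \<le> E / (4 * sqrt L)"
proof -
  define G where "G x = \<bar>dotp d a x\<bar> + \<bar>dotp d b x\<bar> - \<bar>dotp d (\<lambda>i. a i + b i) x\<bar>" for x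
  define D where "D = sqrt (quadf d S a) + sqrt (quadf d S b) - sqrt (quadf d S (\<lambda>i. a i + b i))"
  have intG: "integrable mu G" and intG_eq: "(\<integral>x. G x \<partial>mu) = D * sqrt (2 / pi)"
    using gaussian_abs_dotp[OF g pd] unfolding G_def D_def by (auto simp: algebra_simps)
  have "0 < sqrt (2 / pi)" "sqrt (2 / pi) \<le> 1" using pi_gt3 by simp_all
  then have "D * sqrt (2 / pi) \<le> max D 0"
    by (cases "0 \<le> D") (auto simp: mult_left_le mult_nonpos_nonneg)
  moreover have "D \<le> quadf d S (\<lambda>i. a i - b i) / (2 * sqrt L)"
    unfolding D_def by (rule quadf_triangle_defect_le[OF pd L])
  moreover have "\<dots> \<le> E^2 / (2 * sqrt L)" using E L by (intro divide_right_mono) auto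
  moreover have "0 \<le> E^2 / (2 * sqrt L)" using L by simp
  ultimately have "(\<integral>x. G x \<partial>mu) \<le> E^2 / (2 * sqrt L)" unfolding intG_eq by linarith
  have "measure mu {x \<in> space mu. 2 * E \<le> G x} \<le> (\<integral>x. G x \<partial>mu) / (2 * E)"
    using abs_triangle_ineq[of "dotp d a x" "dotp d b x" for x] \<open>0 < E\<close>
    by (intro integral_Markov_inequality_measure[OF intG sets.top]) (auto simp: G_def dotp_add)
  also have "\<dots> \<le> (E^2 / (2 * sqrt L)) / (2 * E)"
    using \<open>(\<integral>x. G x \<partial>mu) \<le> E^2 / (2 * sqrt L)\<close> E by (intro divide_right_mono) auto
  also have "\<dots> = E / (4 * sqrt L)" using E by (simp add: power2_eq_square)
  finally show ?thesis unfolding G_def .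
qed

lemma abs_add_defect_if_signs_differ:
  fixes u v E :: real
  assumes "(u > 0) \<noteq> (v > 0)" "E \<le> \<bar>u\<bar>" "E \<le> \<bar>v\<bar>"
  shows "2 * E \<le> \<bar>u\<bar> + \<bar>v\<bar> - \<bar>u + v\<bar>"
  using assms by linarith

text \<open>Two halfspaces through the origin disagree only where one of the functionals is
  small or where the triangle defect \<open>|a x| + |b x| - |(a + b) x|\<close> is large.\<close>
lemma halfspace_disagreement_le:
  assumes g: "gaussian d S mu" and pd: "posdef d S"
    and L: "0 < L" "L \<le> quadf d S a" "L \<le> quadf d S b"
    and E: "0 < E" "quadf d S (\<lambda>i. a i - b i) \<le> E^2"
  shows "measure mu {x \<in> space mu. pos (dotp d b x) \<noteq> pos (dotp d a x)} \<le> 3 * E / sqrt L"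
proof -
  interpret prob_space mu using g unfolding gaussian_def by simp
  have [measurable]: "dotp d c \<in> borel_measurable mu" for c
    using measurable_dotp_gaussian[OF g] .
  define T where "T = {x \<in> space mu. 2 * E \<le> \<bar>dotp d a x\<bar> + \<bar>dotp d b x\<bar> - \<bar>dotp d (\<lambda>i. a i + b i) x\<bar>}"
  define Ba where "Ba = {x \<in> space mu. \<bar>dotp d a x\<bar> < E}"
  define Bb where "Bb = {x \<in> space mu. \<bar>dotp d b x\<bar> < E}"
  have [measurable]: "T \<in> sets mu" "Ba \<in> sets mu" "Bb \<in> sets mu"
    unfolding T_def Ba_def Bb_def by measurable
  have small_ball: "measure mu {x \<in> space mu. \<bar>dotp d c x\<bar> < E} \<le> E / sqrt L" if "L \<le> quadf d S c" for c
  proof -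
    have "measure mu {x \<in> space mu. \<bar>dotp d c x\<bar> < E} \<le> E / sqrt (quadf d S c)"
      using gaussian_small_ball[OF g _ \<open>0 < E\<close>] that L by simp
    also have "\<dots> \<le> E / sqrt L" using that L E by (simp add: frac_le)
    finally show ?thesis .
  qed
  have "{x \<in> space mu. pos (dotp d b x) \<noteq> pos (dotp d a x)} \<subseteq> T \<union> Ba \<union> Bb"
    using abs_add_defect_if_signs_differ[of "dotp d a x" "dotp d b x" E for x]
    by (auto simp: T_def Ba_def Bb_def dotp_add pos_def split: if_splits)
  then have "measure mu {x \<in> space mu. pos (dotp d b x) \<noteq> pos (dotp d a x)} \<le> measure mu (T \<union> Ba \<union> Bb)"
    by (rule finite_measure_mono) measurable
  also have "\<dots> \<le> measure mu T + measure mu Ba + measure mu Bb"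
    by (intro measure_Un_le[THEN order_trans] add_right_mono measure_Un_le) measurable
  also have "\<dots> \<le> E / (4 * sqrt L) + E / sqrt L + E / sqrt L"
    using gaussian_triangle_defect_tail_le[OF g pd L E] small_ball[OF L(2)] small_ball[OF L(3)]
    unfolding T_def Ba_def Bb_def by linarith
  also have "\<dots> \<le> 3 * E / sqrt L" using E L by (simp add: field_simps)
  finally show ?thesis .
qed

section \<open>Independent repetitions\<close>

lemma sets_PiM_Collect_Ball:
  assumes "finite T" "T \<subseteq> I" "\<And>i. i \<in> T \<Longrightarrow> X i \<in> sets (M i)"
  shows "{x \<in> space (PiM I M). \<forall>i\<in>T. x i \<in> X i} \<in> sets (PiM I M)"
  using assms by (intro sets.sets_Collect_finite_All sets_Collect_single) auto

lemma measure_PiM_Ex_le_sum: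
  fixes q :: nat
  assumes "\<And>j. prob_space (M j)" and Y: "\<And>j. j < q \<Longrightarrow> Y j \<in> sets (M j)"
  shows "measure (PiM {..<q} M) {B \<in> space (PiM {..<q} M). \<exists>j<q. B j \<in> Y j}
           \<le> (\<Sum>j<q. measure (M j) (Y j))"
proof -
  interpret product_prob_space M "{..<q}"
    using assms(1) by (simp add: product_prob_space_def product_prob_space_axioms_def
        product_sigma_finite_def prob_space_imp_sigma_finite)
  have "{B \<in> space (PiM {..<q} M). \<exists>j<q. B j \<in> Y j}
      = (\<Union>j\<in>{..<q}. {B \<in> space (PiM {..<q} M). B j \<in> Y j})" by auto
  also have "measure (PiM {..<q} M) \<dots>
      \<le> (\<Sum>j<q. measure (PiM {..<q} M) {B \<in> space (PiM {..<q} M). B j \<in> Y j})"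
    by (rule measure_UNION_le) (use Y in auto)
  also have "\<dots> = (\<Sum>j<q. measure (M j) (Y j))"
    using Y by (intro sum.cong refl) (simp add: measure_def emeasure_PiM_Collect_single)
  finally show ?thesis .
qed

lemma Collect_card_ge_eq_UNION:
  fixes s :: nat
  shows "{M \<in> A. m \<le> card {i \<in> {..<s}. M i \<in> X}}
     = (\<Union>T\<in>{T. T \<subseteq> {..<s} \<and> card T = m}. {M \<in> A. \<forall>i\<in>T. M i \<in> X})"
proof (intro equalityI subsetI)
  fix M assume "M \<in> {M \<in> A. m \<le> card {i \<in> {..<s}. M i \<in> X}}"
  then have M: "M \<in> A" "m \<le> card {i \<in> {..<s}. M i \<in> X}" by simp_all
  obtain T where "T \<subseteq> {i \<in> {..<s}. M i \<in> X}" "card T = m"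
    using obtain_subset_with_card_n[OF M(2)] by metis
  with M(1) show "M \<in> (\<Union>T\<in>{T. T \<subseteq> {..<s} \<and> card T = m}. {M \<in> A. \<forall>i\<in>T. M i \<in> X})" by blast
next
  fix M assume "M \<in> (\<Union>T\<in>{T. T \<subseteq> {..<s} \<and> card T = m}. {M \<in> A. \<forall>i\<in>T. M i \<in> X})"
  then obtain T where T: "T \<subseteq> {..<s}" "card T = m" "M \<in> A" "\<forall>i\<in>T. M i \<in> X" by blast
  then have "T \<subseteq> {i \<in> {..<s}. M i \<in> X}" by blast
  then have "m \<le> card {i \<in> {..<s}. M i \<in> X}"
    unfolding T(2)[symmetric] by (rule card_mono[rotated]) (simp add: finite_Collect_conjI)
  with T(3) show "M \<in> {M \<in> A. m \<le> card {i \<in> {..<s}. M i \<in> X}}" by blast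
qed

lemma
  assumes "prob_space P" and X: "X \<in> sets P"
  shows sets_PiM_card_ge:
      "{M \<in> space (PiM {..<s} (\<lambda>_. P)). m \<le> card {i \<in> {..<s}. M i \<in> X}} \<in> sets (PiM {..<s} (\<lambda>_. P))"
    and measure_PiM_card_ge_le:
      "measure (PiM {..<s} (\<lambda>_. P)) {M \<in> space (PiM {..<s} (\<lambda>_. P)). m \<le> card {i \<in> {..<s}. M i \<in> X}}
         \<le> real (s choose m) * measure P X ^ m"
proof -
  interpret P': prob_space P by fact
  interpret product_prob_space "\<lambda>_. P" "{..<s}" by unfold_locales
  let ?Ts = "{T. T \<subseteq> {..<s} \<and> card T = m}"
  let ?A = "\<lambda>T. {M \<in> space (PiM {..<s} (\<lambda>_. P)). \<forall>i\<in>T. M i \<in> X}"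
  have finTs: "finite ?Ts" by (rule finite_subset[of _ "Pow {..<s}"]) auto
  have sets_A: "?A T \<in> sets (PiM {..<s} (\<lambda>_. P))" if "T \<in> ?Ts" for T
    using that X by (intro sets_PiM_Collect_Ball) (auto intro: finite_subset)
  show "{M \<in> space (PiM {..<s} (\<lambda>_. P)). m \<le> card {i \<in> {..<s}. M i \<in> X}} \<in> sets (PiM {..<s} (\<lambda>_. P))"
    unfolding Collect_card_ge_eq_UNION using finTs sets_A by blast
  have "measure (PiM {..<s} (\<lambda>_. P)) (\<Union>T\<in>?Ts. ?A T) \<le> (\<Sum>T\<in>?Ts. measure (PiM {..<s} (\<lambda>_. P)) (?A T))"
    by (rule measure_UNION_le[OF finTs sets_A])
  also have "\<dots> = (\<Sum>T\<in>?Ts. measure P X ^ m)"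
  proof (intro sum.cong refl)
    fix T assume T: "T \<in> ?Ts"
    then have "emeasure (PiM {..<s} (\<lambda>_. P)) (?A T) = (\<Prod>i\<in>T. emeasure P X)"
      using X by (intro emeasure_PiM_Collect) (auto intro: finite_subset)
    also have "\<dots> = ennreal (measure P X ^ m)"
      using T by (simp add: P'.emeasure_eq_measure ennreal_power)
    finally show "measure (PiM {..<s} (\<lambda>_. P)) (?A T) = measure P X ^ m"
      unfolding measure_def by simp
  qed
  also have "\<dots> = real (s choose m) * measure P X ^ m"
    using n_subsets[of "{..<s}" m] by simp
  finally show "measure (PiM {..<s} (\<lambda>_. P)) {M \<in> space (PiM {..<s} (\<lambda>_. P)). m \<le> card {i \<in> {..<s}. M i \<in> X}}
      \<le> real (s choose m) * measure P X ^ m"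
    unfolding Collect_card_ge_eq_UNION .
qed

text \<open>At most \<open>2^s\<close> ways to choose half of the \<open>s\<close> coordinates, each set of choices
  having probability at most \<open>(1/64)^(s/2) = (1/8)^s\<close>.\<close>
lemma
  assumes P: "prob_space P" and X: "X \<in> sets P" and small: "measure P X \<le> 1/64"
  shows sets_PiM_majority:
      "{M \<in> space (PiM {..<s} (\<lambda>_. P)). s \<le> 2 * card {i \<in> {..<s}. M i \<in> X}} \<in> sets (PiM {..<s} (\<lambda>_. P))"
    and measure_PiM_majority_le:
      "measure (PiM {..<s} (\<lambda>_. P)) {M \<in> space (PiM {..<s} (\<lambda>_. P)). s \<le> 2 * card {i \<in> {..<s}. M i \<in> X}}
         \<le> (1/4)^s"
proof -
  define m where "m = (s + 1) div 2"
  have majority_eq: "{M \<in> space (PiM {..<s} (\<lambda>_. P)). s \<le> 2 * card {i \<in> {..<s}. M i \<in> X}}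
      = {M \<in> space (PiM {..<s} (\<lambda>_. P)). m \<le> card {i \<in> {..<s}. M i \<in> X}}"
  proof -
    have "s \<le> 2 * c \<longleftrightarrow> m \<le> c" for c unfolding m_def by presburger
    then show ?thesis by simp
  qed
  show "{M \<in> space (PiM {..<s} (\<lambda>_. P)). s \<le> 2 * card {i \<in> {..<s}. M i \<in> X}} \<in> sets (PiM {..<s} (\<lambda>_. P))"
    unfolding majority_eq by (rule sets_PiM_card_ge[OF P X])
  have "real (s choose m) * measure P X ^ m \<le> 2^s * (1/8)^s"
  proof (intro mult_mono)
    show "real (s choose m) \<le> 2^s"
      using binomial_le_pow2[of s m] by (metis of_nat_le_iff of_nat_numeral of_nat_power)
    have "measure P X ^ m \<le> ((1/8)^2)^m"
      using small by (intro power_mono) (auto simp: power2_eq_square)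
    also have "\<dots> \<le> (1/8)^s"
      unfolding power_mult[symmetric] by (rule power_decreasing) (auto simp: m_def)
    finally show "measure P X ^ m \<le> (1/8)^s" .
  qed auto
  also have "(2::real)^s * (1/8)^s = (1/4)^s" by (simp add: power_mult_distrib[symmetric])
  finally show "measure (PiM {..<s} (\<lambda>_. P)) {M \<in> space (PiM {..<s} (\<lambda>_. P)). s \<le> 2 * card {i \<in> {..<s}. M i \<in> X}}
      \<le> (1/4)^s"
    unfolding majority_eq using measure_PiM_card_ge_le[OF P X, of s m] by linarith
qed

section \<open>Bags and the choice of orientation\<close>

lemma measurable_bag_err_sample:
  assumes h: "h \<in> borel_measurable D"
  shows "(\<lambda>M. bag_err_sample h q k s M) \<in> borel_measurable (PiM {..<s} (\<lambda>_. bag_oracle f D q k))"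
proof -
  define Mj where "Mj j = (if j < k then uniform_measure D {x \<in> space D. f x = 1}
    else uniform_measure D {x \<in> space D. f x = 0})" for j
  have "h \<in> borel_measurable (Mj j)" for j
    using h by (simp add: Mj_def measurable_cong_sets[OF sets_uniform_measure refl])
  then have [measurable]: "(\<lambda>M. h (M i j)) \<in> borel_measurable (PiM {..<s} (\<lambda>_. bag_oracle f D q k))"
    if "i < s" "j < q" for i j
  proof (rule measurable_compose[rotated])
    have "(\<lambda>M. M i) \<in> measurable (PiM {..<s} (\<lambda>_. bag_oracle f D q k)) (PiM {..<q} Mj)"
      using that unfolding bag_oracle_def Mj_def by (intro measurable_component_singleton) auto
    moreover have "(\<lambda>B. B j) \<in> measurable (PiM {..<q} Mj) (Mj j)"
      using that by (intro measurable_component_singleton) auto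
    ultimately show "(\<lambda>M. M i j) \<in> measurable (PiM {..<s} (\<lambda>_. bag_oracle f D q k)) (Mj j)"
      by (rule measurable_compose)
  qed
  have "(\<lambda>M. real (card {i \<in> {..<s}. (\<Sum>j<q. h (M i j)) / real q \<noteq> real k / real q}))
      = (\<lambda>M. \<Sum>i<s. if (\<Sum>j<q. h (M i j)) / real q \<noteq> real k / real q then 1 else 0)"
    by (simp add: sum.If_cases Int_def)
  moreover have "(\<lambda>M. \<Sum>i<s. if (\<Sum>j<q. h (M i j)) / real q \<noteq> real k / real q then 1 else 0 :: real)
      \<in> borel_measurable (PiM {..<s} (\<lambda>_. bag_oracle f D q k))"
    by measurable
  ultimately show ?thesis unfolding bag_err_sample_def by simp
qed

lemma space_bag_oracle: "space (bag_oracle f D q k) = PiE {..<q} (\<lambda>_. space D)"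
  unfolding bag_oracle_def space_PiM by (intro PiE_cong) simp

lemma prob_space_bag_oracle:
  assumes "prob_space D"
    and "emeasure D {x \<in> space D. f x = 1} \<noteq> 0" "emeasure D {x \<in> space D. f x = 0} \<noteq> 0"
  shows "prob_space (bag_oracle f D q k)"
proof -
  interpret D: prob_space D by fact
  show ?thesis
    unfolding bag_oracle_def using assms(2,3)
    by (intro prob_space_PiM) (auto intro!: prob_space_uniform_measure)
qed

text \<open>Conditioning on a class of probability \<open>1/2\<close> at most doubles the probability of \<open>Z\<close>.\<close>
lemma bag_oracle_bad_point_le:
  fixes f :: "'b \<Rightarrow> real" and q k :: nat
  assumes D: "prob_space D" and f: "f \<in> borel_measurable D" and Z: "Z \<in> sets D"
    and half: "measure D {x \<in> space D. f x = 1} = 1/2" "measure D {x \<in> space D. f x = 0} = 1/2"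
  defines "Bad \<equiv> {B \<in> space (bag_oracle f D q k). \<exists>j<q. B j \<in> Z \<or> f (B j) \<noteq> (if j < k then 1 else 0)}"
  shows "Bad \<in> sets (bag_oracle f D q k)" and "measure (bag_oracle f D q k) Bad \<le> 2 * q * measure D Z"
proof -
  interpret D: prob_space D by fact
  have [measurable]: "f \<in> borel_measurable D" by fact
  define A where "A j = {x \<in> space D. f x = (if j < k then 1 else 0)}" for j
  define Y where "Y j = Z \<union> {x \<in> space D. f x \<noteq> (if j < k then 1 else 0)}" for j
  have "{x \<in> space D. f x \<noteq> c} \<in> sets D" for c :: real
    by measurable
  then have sets_Y: "Y j \<in> sets D" for j
    unfolding Y_def using Z by blast
  have mA: "measure D (A j) = 1/2" for j using half by (simp add: A_def)
  have eA: "emeasure D (A j) \<noteq> 0" "emeasure D (A j) \<noteq> \<infinity>" for j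
    using mA[of j] by (simp_all add: D.emeasure_eq_measure)
  have bag: "bag_oracle f D q k = PiM {..<q} (\<lambda>j. uniform_measure D (A j))"
    unfolding bag_oracle_def A_def by (intro PiM_cong refl) simp
  have Bad_UN: "Bad = (\<Union>j<q. {B \<in> space (PiM {..<q} (\<lambda>j. uniform_measure D (A j))). B j \<in> Y j})"
    using sets.sets_into_space[OF Z]
    unfolding Bad_def bag Y_def by (auto simp: space_PiM PiE_iff)
  show "Bad \<in> sets (bag_oracle f D q k)"
    unfolding Bad_UN bag using sets_Y by (intro sets.finite_UN sets_Collect_single) simp_all
  have Bad_eq: "Bad = {B \<in> space (PiM {..<q} (\<lambda>j. uniform_measure D (A j))). \<exists>j<q. B j \<in> Y j}"
    unfolding Bad_UN by blast
  have "measure (uniform_measure D (A j)) (Y j) \<le> 2 * measure D Z" for j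
  proof -
    have "measure (uniform_measure D (A j)) (Y j) = measure D (A j \<inter> Y j) / measure D (A j)"
      using eA sets_Y by simp
    also have "\<dots> \<le> measure D Z / (1/2)"
      unfolding mA using Z by (intro divide_right_mono D.finite_measure_mono) (auto simp: A_def Y_def)
    finally show ?thesis by simp
  qed
  then have "(\<Sum>j<q. measure (uniform_measure D (A j)) (Y j)) \<le> 2 * q * measure D Z"
    using sum_mono[of "{..<q}" "\<lambda>j. measure (uniform_measure D (A j)) (Y j)" "\<lambda>_. 2 * measure D Z"]
    by simp
  moreover have "measure (bag_oracle f D q k) Bad \<le> (\<Sum>j<q. measure (uniform_measure D (A j)) (Y j))"
    unfolding Bad_eq bag using eA sets_Y
    by (intro measure_PiM_Ex_le_sum prob_space_uniform_measure) simp_all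
  ultimately show "measure (bag_oracle f D q k) Bad \<le> 2 * q * measure D Z" by linarith
qed

lemma halfspace_bag_label_sums:
  fixes B :: "nat \<Rightarrow> nat \<Rightarrow> real"
  assumes "k \<le> q"
    and labels: "\<And>j. j < q \<Longrightarrow> pos (dotp d c (B j)) = (if j < k then 1 else 0)"
    and nonzero: "\<And>j. j < q \<Longrightarrow> dotp d c (B j) \<noteq> 0"
  shows "(\<Sum>j<q. pos (dotp d c (B j))) = real k"
    and "(\<Sum>j<q. pos (- dotp d c (B j))) = real q - real k"
proof -
  have "(\<Sum>j<q. pos (dotp d c (B j))) = (\<Sum>j<q. if j < k then 1 else 0)"
    using labels by simp
  also have "\<dots> = real k"
  proof -
    have "{j. j < q \<and> j < k} = {..<k}" using \<open>k \<le> q\<close> by auto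
    then show ?thesis by (simp add: sum.If_cases Int_def)
  qed
  finally show sum_pos: "(\<Sum>j<q. pos (dotp d c (B j))) = real k" .
  have "(\<Sum>j<q. pos (- dotp d c (B j))) = (\<Sum>j<q. 1 - pos (dotp d c (B j)))"
    using nonzero by (intro sum.cong refl) (auto simp: pos_def)
  then show "(\<Sum>j<q. pos (- dotp d c (B j))) = real q - real k"
    using sum_pos by (simp add: sum_subtractf)
qed

text \<open>On a correctly labelled bag the flipped classifier has label proportion \<open>(q - k)/q\<close>,
  which differs from \<open>k/q\<close>; so it can win the comparison only if at least half of the bags
  are not correctly labelled.\<close>
lemma majority_bad_if_bag_err_sample_le:
  assumes "k \<le> q" "2 * k \<noteq> q"
    and good: "\<And>i. i < s \<Longrightarrow> \<not> P i \<Longrightarrow>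
        (\<Sum>j<q. h (M i j)) = real k \<and> (\<Sum>j<q. h' (M i j)) = real q - real k"
    and le: "bag_err_sample h' q k s M \<le> bag_err_sample h q k s M"
  shows "s \<le> 2 * card {i \<in> {..<s}. P i}"
proof -
  define N where "N = {i \<in> {..<s}. P i}"
  define W where "W g = {i \<in> {..<s}. (\<Sum>j<q. g (M i j)) / real q \<noteq> real k / real q}" for g
  have "0 < q" using assms(1,2) by (cases q) auto
  have "W h \<subseteq> N" using good unfolding W_def N_def by auto
  then have "card (W h) \<le> card N" by (intro card_mono) (simp_all add: N_def)
  moreover have "{..<s} - N \<subseteq> W h'"
    using good \<open>2 * k \<noteq> q\<close> \<open>0 < q\<close> unfolding W_def N_def by (auto simp: divide_cancel_right)
  then have "card ({..<s} - N) \<le> card (W h')" by (intro card_mono) (simp_all add: W_def)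
  moreover have "card (W h') \<le> card (W h)"
  proof (cases "s = 0")
    case False
    then show ?thesis using le unfolding bag_err_sample_def W_def by (simp add: divide_le_cancel)
  qed (simp add: W_def)
  moreover have "card ({..<s} - N) = s - card N" by (subst card_Diff_subset) (auto simp: N_def)
  ultimately have "s - card N \<le> card N" by linarith
  then show ?thesis unfolding N_def by linarith
qed

lemma flipped_halfspace_wins_only_if_majority_misread:
  fixes M :: "nat \<Rightarrow> nat \<Rightarrow> nat \<Rightarrow> real"
  assumes kq: "k \<le> q" and kh: "2 * k \<noteq> q"
    and le: "bag_err_sample (\<lambda>x. pos (- dotp d c x)) q k s M \<le> bag_err_sample (\<lambda>x. pos (dotp d c x)) q k s M"
  shows "s \<le> 2 * card {i \<in> {..<s}. \<exists>j<q. dotp d c (M i j) = 0 \<or>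
                                         pos (dotp d c (M i j)) \<noteq> (if j < k then 1 else 0)}"
proof (rule majority_bad_if_bag_err_sample_le[OF kq kh _ le])
  fix i assume "\<not> (\<exists>j<q. dotp d c (M i j) = 0 \<or> pos (dotp d c (M i j)) \<noteq> (if j < k then 1 else 0))"
  then show "(\<Sum>j<q. pos (dotp d c (M i j))) = real k \<and> (\<Sum>j<q. pos (- dotp d c (M i j))) = real q - real k"
    using halfspace_bag_label_sums[OF kq, of d c "M i"] by auto
qed

lemma gaussian_halfspace_classes:
  assumes g: "gaussian d S mu" and "0 < quadf d S r"
  shows "measure mu {x \<in> space mu. pos (dotp d r x) = 1} = 1/2"
    and "measure mu {x \<in> space mu. pos (dotp d r x) = 0} = 1/2"
proof -
  have "{x \<in> space mu. pos (dotp d r x) = 1} = {x \<in> space mu. dotp d r x > 0}"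
    and "{x \<in> space mu. pos (dotp d r x) = 0} = {x \<in> space mu. \<not> dotp d r x > 0}"
    by (auto simp: pos_def)
  with gaussian_dotp_pos[OF assms]
  show "measure mu {x \<in> space mu. pos (dotp d r x) = 1} = 1/2"
    and "measure mu {x \<in> space mu. pos (dotp d r x) = 0} = 1/2" by simp_all
qed

lemma prob_space_halfspace_bags:
  assumes g: "gaussian d S mu" and "0 < quadf d S r"
  shows "prob_space (bag_oracle (\<lambda>x. pos (dotp d r x)) mu q k)"
proof -
  interpret prob_space mu using g unfolding gaussian_def by simp
  show ?thesis
    using gaussian_halfspace_classes[OF assms]
    by (intro prob_space_bag_oracle prob_space_axioms) (simp_all add: emeasure_eq_measure)
qed

lemma gaussian_halfspace_misread:
  assumes g: "gaussian d S mu" and qc: "0 < quadf d S c"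
  shows "{x \<in> space mu. pos (dotp d c x) \<noteq> pos (dotp d r x) \<or> dotp d c x = 0} \<in> sets mu"
    and "measure mu {x \<in> space mu. pos (dotp d c x) \<noteq> pos (dotp d r x) \<or> dotp d c x = 0}
      \<le> measure mu {x \<in> space mu. pos (dotp d c x) \<noteq> pos (dotp d r x)}"
proof -
  have [measurable]: "dotp d v \<in> borel_measurable mu" for v
    using measurable_dotp_gaussian[OF g] .
  have "{x \<in> space mu. pos (dotp d c x) = pos (dotp d r x)} \<in> sets mu"
    by (rule measurable_equality_set) measurable
  then have "space mu - {x \<in> space mu. pos (dotp d c x) = pos (dotp d r x)} \<in> sets mu" by blast
  moreover have "space mu - {x \<in> space mu. pos (dotp d c x) = pos (dotp d r x)}
      = {x \<in> space mu. pos (dotp d c x) \<noteq> pos (dotp d r x)}" by blast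
  ultimately have disagree: "{x \<in> space mu. pos (dotp d c x) \<noteq> pos (dotp d r x)} \<in> sets mu" by simp
  have zero: "{x \<in> space mu. dotp d c x = 0} \<in> sets mu"
    by (rule measurable_equality_set) measurable
  have eq: "{x \<in> space mu. pos (dotp d c x) \<noteq> pos (dotp d r x) \<or> dotp d c x = 0}
      = {x \<in> space mu. pos (dotp d c x) \<noteq> pos (dotp d r x)} \<union> {x \<in> space mu. dotp d c x = 0}" by blast
  show "{x \<in> space mu. pos (dotp d c x) \<noteq> pos (dotp d r x) \<or> dotp d c x = 0} \<in> sets mu"
    unfolding eq using disagree zero by blast
  show "measure mu {x \<in> space mu. pos (dotp d c x) \<noteq> pos (dotp d r x) \<or> dotp d c x = 0}
      \<le> measure mu {x \<in> space mu. pos (dotp d c x) \<noteq> pos (dotp d r x)}"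
    unfolding eq using measure_Un_le[OF disagree zero] gaussian_dotp_eq_0[OF g qc] by linarith
qed

lemma bag_err_sample_prefers_correct_orientation:
  fixes mu :: "(nat \<Rightarrow> real) measure" and q k s :: nat
  assumes g: "gaussian d S mu" and qrs: "0 < quadf d S rs" and qgv: "0 < quadf d S gv"
    and kq: "k \<le> q" and kh: "2 * k \<noteq> q"
    and small: "128 * q * measure mu {x \<in> space mu. pos (dotp d gv x) \<noteq> pos (dotp d rs x)} \<le> 1"
  shows "1 - (1/4)^s \<le> measure (PiM {..<s} (\<lambda>_. bag_oracle (\<lambda>x. pos (dotp d rs x)) mu q k))
     {M \<in> space (PiM {..<s} (\<lambda>_. bag_oracle (\<lambda>x. pos (dotp d rs x)) mu q k)).
        bag_err_sample (\<lambda>x. pos (dotp d gv x)) q k s M < bag_err_sample (\<lambda>x. pos (- dotp d gv x)) q k s M}"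
    (is "_ \<le> measure ?Bm {M \<in> space ?Bm. ?e M < ?e' M}")
proof -
  define bag where "bag = bag_oracle (\<lambda>x. pos (dotp d rs x)) mu q k"
  define Z where "Z = {x \<in> space mu. pos (dotp d gv x) \<noteq> pos (dotp d rs x) \<or> dotp d gv x = 0}"
  define Bad where "Bad = {B \<in> space bag. \<exists>j<q. B j \<in> Z \<or> pos (dotp d rs (B j)) \<noteq> (if j < k then 1 else 0)}"
  define Maj where "Maj = {M \<in> space ?Bm. s \<le> 2 * card {i \<in> {..<s}. M i \<in> Bad}}"
  interpret mu: prob_space mu using g unfolding gaussian_def by simp
  have [measurable]: "dotp d v \<in> borel_measurable mu" for v
    using measurable_dotp_gaussian[OF g] .
  have "prob_space bag" unfolding bag_def by (rule prob_space_halfspace_bags[OF g qrs])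
  interpret Bm: prob_space ?Bm using prob_space_halfspace_bags[OF g qrs] by (intro prob_space_PiM)
  have label_meas: "(\<lambda>x. pos (dotp d rs x)) \<in> borel_measurable mu" by measurable
  note misread = gaussian_halfspace_misread[OF g qgv, of rs, folded Z_def]
  note bad_point = bag_oracle_bad_point_le[OF mu.prob_space_axioms label_meas misread(1)
      gaussian_halfspace_classes[OF g qrs], of q k, folded bag_def]
  have sets_Bad: "Bad \<in> sets bag" unfolding Bad_def by (rule bad_point(1))
  have "measure bag Bad \<le> 2 * q * measure mu Z" unfolding Bad_def by (rule bad_point(2))
  moreover have "2 * q * measure mu Z \<le> 1/64"
    using misread(2) small mult_left_mono[OF misread(2), of "real q"] by simp
  ultimately have small_Bad: "measure bag Bad \<le> 1/64" by linarith
  have sets_Maj: "Maj \<in> sets ?Bm" and measure_Maj: "measure ?Bm Maj \<le> (1/4)^s"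
    unfolding Maj_def bag_def[symmetric]
    by (rule sets_PiM_majority[OF \<open>prob_space bag\<close> sets_Bad small_Bad],
        rule measure_PiM_majority_le[OF \<open>prob_space bag\<close> sets_Bad small_Bad])
  have wrong_sub: "{M \<in> space ?Bm. \<not> ?e M < ?e' M} \<subseteq> Maj"
  proof (intro subsetI, elim CollectE conjE)
    fix M assume M: "M \<in> space ?Bm" and "\<not> ?e M < ?e' M"
    then have "s \<le> 2 * card {i \<in> {..<s}. \<exists>j<q. dotp d gv (M i j) = 0 \<or>
                                         pos (dotp d gv (M i j)) \<noteq> (if j < k then 1 else 0)}"
      by (intro flipped_halfspace_wins_only_if_majority_misread[OF kq kh]) simp
    moreover have "card {i \<in> {..<s}. \<exists>j<q. dotp d gv (M i j) = 0 \<or>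
                                         pos (dotp d gv (M i j)) \<noteq> (if j < k then 1 else 0)}
        \<le> card {i \<in> {..<s}. M i \<in> Bad}"
    proof (intro card_mono subsetI)
      fix i assume i: "i \<in> {i \<in> {..<s}. \<exists>j<q. dotp d gv (M i j) = 0 \<or>
                                         pos (dotp d gv (M i j)) \<noteq> (if j < k then 1 else 0)}"
      then have "M i \<in> space bag"
        using M PiE_mem[of M "{..<s}" "\<lambda>_. space bag" i] unfolding bag_def space_PiM by simp
      then show "i \<in> {i \<in> {..<s}. M i \<in> Bad}"
        using i unfolding Bad_def Z_def bag_def space_bag_oracle by (auto simp: PiE_iff)
    qed simp
    ultimately show "M \<in> Maj" using M unfolding Maj_def by simp
  qed
  have [measurable]: "?e \<in> borel_measurable ?Bm" "?e' \<in> borel_measurable ?Bm"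
    by (rule measurable_bag_err_sample, measurable)+
  have sets_wrong: "{M \<in> space ?Bm. \<not> ?e M < ?e' M} \<in> sets ?Bm" by measurable
  have "measure ?Bm {M \<in> space ?Bm. \<not> ?e M < ?e' M} \<le> (1/4)^s"
    using Bm.finite_measure_mono[OF wrong_sub sets_Maj] measure_Maj by linarith
  moreover have "space ?Bm - {M \<in> space ?Bm. \<not> ?e M < ?e' M} = {M \<in> space ?Bm. ?e M < ?e' M}" by blast
  ultimately show ?thesis using Bm.prob_compl[OF sets_wrong] by simp
qed

lemma sample_size_bound:
  fixes s d q :: nat and C \<epsilon> \<delta> :: real
  assumes "1 \<le> C" "1 \<le> d" "2 \<le> q" "0 < \<epsilon>" "\<epsilon> < 1" "0 < \<delta>" "\<delta> < 1"
    and s: "C * real d * (ln (real q) + ln (1 / \<delta>)) / \<epsilon>\<^sup>2 \<le> real s"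
  shows "(1/4::real)^s \<le> \<delta>/2"
proof -
  define X where "X = ln (real q) + ln (1 / \<delta>)"
  have "ln 2 \<le> ln (real q)" "0 < ln (1 / \<delta>)" using assms by simp_all
  then have X: "ln 2 + ln (1 / \<delta>) \<le> X" "0 < X" unfolding X_def using ln_gt_zero[of 2] by linarith+
  have "1 * 1 \<le> C * real d" using assms by (intro mult_mono) auto
  moreover have "0 < \<epsilon>\<^sup>2" "\<epsilon>\<^sup>2 \<le> 1" using assms by (simp_all add: power_le_one)
  ultimately have "1 \<le> C * real d / \<epsilon>\<^sup>2" by (simp add: le_divide_eq)
  then have "X \<le> real s"
    using s X(2) mult_left_mono[of 1 "C * real d / \<epsilon>\<^sup>2" X] unfolding X_def by (simp add: mult_ac)
  have "exp (real s) = exp 1 ^ s" using exp_of_nat_mult[of s 1] by simp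
  also have "\<dots> \<le> 4 ^ s" using exp_le by (intro power_mono) auto
  finally have "exp (real s) \<le> 4 ^ s" .
  then have "(1/4::real)^s \<le> exp (- real s)"
    by (simp add: exp_minus power_one_over field_simps)
  also have "\<dots> \<le> exp (- (ln 2 + ln (1 / \<delta>)))"
    using X \<open>X \<le> real s\<close> by simp
  also have "\<dots> = inverse (exp (ln 2) * exp (ln (1 / \<delta>)))"
    by (simp only: exp_minus exp_add)
  also have "\<dots> = \<delta> / 2"
    using assms by simp
  finally show ?thesis .
qed

lemma quadf_pos_if_vnorm_eq_1:
  assumes "posdef d S" and "vnorm d v = 1"
  shows "0 < quadf d S v"
proof -
  have "\<exists>i<d. v i \<noteq> 0"
  proof (rule ccontr)
    assume "\<not> (\<exists>i<d. v i \<noteq> 0)"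
    then have "vnorm d v = 0" by (simp add: vnorm_def)
    with assms(2) show False by simp
  qed
  with assms(1) show ?thesis unfolding posdef_def by blast
qed

lemma halfspace_disagreement_eigen_le:
  assumes sym: "sym_mat d S" and pd: "posdef d S"
    and emax: "\<forall>l. is_eigenvalue d S l \<longrightarrow> l \<le> lmax"
    and evmin: "is_eigenvalue d S lmin" and emin: "\<forall>l. is_eigenvalue d S l \<longrightarrow> lmin \<le> l"
    and g: "gaussian d S mu" and rs: "vnorm d rs = 1" and gv: "vnorm d gv = 1"
    and close: "vnorm d (\<lambda>i. rs i - gv i) \<le> \<epsilon>" and "0 < \<epsilon>"
  shows "measure mu {x \<in> space mu. pos (dotp d gv x) \<noteq> pos (dotp d rs x)} \<le> 3 * (\<epsilon> * sqrt (lmax / lmin))"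
proof -
  have "0 < d" using rs by (cases d) (simp_all add: vnorm_def)
  have "0 < lmin" by (rule eigenvalue_pos_if_posdef[OF pd evmin])
  have "0 \<le> vnorm d (\<lambda>i. rs i - gv i)" by (simp add: vnorm_def sum_nonneg)
  then have sq: "sqnorm d rs = 1" "sqnorm d gv = 1" "sqnorm d (\<lambda>i. rs i - gv i) \<le> \<epsilon>^2"
    using rs gv power_mono[OF close, of 2] by (simp_all add: vnorm_power2[symmetric])
  note lower = min_eigenvalue_le_quadf[OF sym \<open>0 < d\<close> emin]
  note upper = quadf_le_max_eigenvalue[OF sym \<open>0 < d\<close> emax]
  have L: "lmin \<le> quadf d S rs" "lmin \<le> quadf d S gv"
    using lower[of rs] lower[of gv] sq by simp_all
  then have "0 < lmax" using upper[of rs] sq \<open>0 < lmin\<close> by simp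
  have "lmax * sqnorm d (\<lambda>i. rs i - gv i) \<le> lmax * \<epsilon>^2"
    using sq(3) \<open>0 < lmax\<close> by (intro mult_left_mono) auto
  moreover have "(\<epsilon> * sqrt lmax)^2 = lmax * \<epsilon>^2"
    using \<open>0 < lmax\<close> by (simp add: power_mult_distrib)
  ultimately have "quadf d S (\<lambda>i. rs i - gv i) \<le> (\<epsilon> * sqrt lmax)^2"
    using upper[of "\<lambda>i. rs i - gv i"] by linarith
  then have "measure mu {x \<in> space mu. pos (dotp d gv x) \<noteq> pos (dotp d rs x)} \<le> 3 * (\<epsilon> * sqrt lmax) / sqrt lmin"
    using halfspace_disagreement_le[OF g pd \<open>0 < lmin\<close> L] \<open>0 < \<epsilon>\<close> \<open>0 < lmax\<close> by simp
  also have "\<dots> = 3 * (\<epsilon> * sqrt (lmax / lmin))" by (simp add: real_sqrt_divide)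
  finally show ?thesis .
qed

text \<open>A tie selects both classifiers, so unless the flipped one is itself within the bound,
  a strict preference for the correctly oriented one is needed.\<close>
lemma bag_selection_bound_if_close:
  fixes mu :: "(nat \<Rightarrow> real) measure" and q k s :: nat
  assumes sym: "sym_mat d S" and pd: "posdef d S"
    and emax: "\<forall>l. is_eigenvalue d S l \<longrightarrow> l \<le> lmax"
    and evmin: "is_eigenvalue d S lmin" and emin: "\<forall>l. is_eigenvalue d S l \<longrightarrow> lmin \<le> l"
    and g: "gaussian d S mu"
    and rs: "vnorm d rs = 1" and gv: "vnorm d gv = 1" and close: "vnorm d (\<lambda>i. rs i - gv i) \<le> \<epsilon>"
    and kq: "k \<le> q" and kh: "2 * k \<noteq> q" and "0 < \<epsilon>"
    and bound: "384 * real q * \<epsilon> * sqrt (lmax / lmin) \<le> bound"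
    and s: "(1/4)^s \<le> \<delta>/2"
  shows "1 - \<delta>/2 \<le> measure (PiM {..<s} (\<lambda>_. bag_oracle (\<lambda>x. pos (dotp d rs x)) mu q k))
     {M \<in> space (PiM {..<s} (\<lambda>_. bag_oracle (\<lambda>x. pos (dotp d rs x)) mu q k)).
       (bag_err_sample (\<lambda>x. pos (dotp d gv x)) q k s M \<le> bag_err_sample (\<lambda>x. pos (- dotp d gv x)) q k s M \<longrightarrow>
          measure mu {x \<in> space mu. pos (dotp d gv x) \<noteq> pos (dotp d rs x)} \<le> bound) \<and>
       (bag_err_sample (\<lambda>x. pos (- dotp d gv x)) q k s M \<le> bag_err_sample (\<lambda>x. pos (dotp d gv x)) q k s M \<longrightarrow>
          measure mu {x \<in> space mu. pos (- dotp d gv x) \<noteq> pos (dotp d rs x)} \<le> bound)}"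
    (is "_ \<le> measure ?Bm ?Good")
proof -
  interpret mu: prob_space mu using g unfolding gaussian_def by simp
  let ?err = "\<lambda>h. measure mu {x \<in> space mu. h x \<noteq> pos (dotp d rs x)}"
  define t where "t = \<epsilon> * sqrt (lmax / lmin)"
  have err_h: "?err (\<lambda>x. pos (dotp d gv x)) \<le> 3 * t"
    unfolding t_def by (rule halfspace_disagreement_eigen_le[OF sym pd emax evmin emin g rs gv close \<open>0 < \<epsilon>\<close>])
  then have "0 \<le> t" using measure_nonneg[of mu] by (smt (verit))
  moreover have "1 \<le> real q" using kq kh by (cases q) auto
  ultimately have "3 * t \<le> 384 * real q * t" by (intro mult_right_mono) auto
  moreover have "384 * real q * t \<le> bound" using bound by (simp add: t_def mult_ac)
  moreover have "128 * real q * ?err (\<lambda>x. pos (dotp d gv x)) \<le> 128 * real q * (3 * t)"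
    by (intro mult_left_mono err_h) simp
  ultimately have err_h_bound: "?err (\<lambda>x. pos (dotp d gv x)) \<le> bound"
    and small: "128 * real q * ?err (\<lambda>x. pos (dotp d gv x)) \<le> bound"
    using err_h by (simp_all add: algebra_simps)
  have qrs: "0 < quadf d S rs" and qgv: "0 < quadf d S gv"
    using quadf_pos_if_vnorm_eq_1[OF pd] rs gv by simp_all
  show ?thesis
  proof (cases "?err (\<lambda>x. pos (- dotp d gv x)) \<le> bound")
    case True
    interpret Bm: prob_space ?Bm
      using prob_space_halfspace_bags[OF g qrs] by (intro prob_space_PiM)
    have "?Good = space ?Bm" using True err_h_bound by auto
    moreover have "(0::real) \<le> (1/4)^s" by simp
    then have "0 \<le> \<delta>" using s by linarith
    ultimately show ?thesis using Bm.prob_space by simp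
  next
    case False
    then have "128 * q * ?err (\<lambda>x. pos (dotp d gv x)) \<le> 1"
      using mu.prob_le_1[of "{x \<in> space mu. pos (- dotp d gv x) \<noteq> pos (dotp d rs x)}"] small by linarith
    then have "1 - (1/4)^s \<le> measure ?Bm {M \<in> space ?Bm.
        bag_err_sample (\<lambda>x. pos (dotp d gv x)) q k s M < bag_err_sample (\<lambda>x. pos (- dotp d gv x)) q k s M}"
      by (rule bag_err_sample_prefers_correct_orientation[OF g qrs qgv kq kh])
    moreover have "?Good = {M \<in> space ?Bm.
        bag_err_sample (\<lambda>x. pos (dotp d gv x)) q k s M < bag_err_sample (\<lambda>x. pos (- dotp d gv x)) q k s M}"
      using False err_h_bound by auto
    ultimately show ?thesis using s by simp
  qed
qed

lemma bag_selection_bound: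
  fixes mu :: "(nat \<Rightarrow> real) measure" and q k s :: nat
  assumes sym: "sym_mat d S" and pd: "posdef d S"
    and evmax: "is_eigenvalue d S lmax" and emax: "\<forall>l. is_eigenvalue d S l \<longrightarrow> l \<le> lmax"
    and evmin: "is_eigenvalue d S lmin" and emin: "\<forall>l. is_eigenvalue d S l \<longrightarrow> lmin \<le> l"
    and g: "gaussian d S mu" and rs: "vnorm d rs = 1" and rh: "vnorm d rh = 1"
    and "2 \<le> q" and kq: "k \<le> q" and kh: "2 * k \<noteq> q"
    and "0 < \<epsilon>" "\<epsilon> < 1" "0 < \<delta>" "\<delta> < 1"
    and close: "min (vnorm d (\<lambda>i. rh i - rs i)) (vnorm d (\<lambda>i. rh i + rs i)) \<le> \<epsilon>"
    and "1 \<le> C" and "24 \<le> c0"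
    and s: "C * real d * (ln (real q) + ln (1 / \<delta>)) / \<epsilon>\<^sup>2 \<le> real s"
  shows "1 - \<delta>/2 \<le> measure (PiM {..<s} (\<lambda>_. bag_oracle (\<lambda>x. pos (dotp d rs x)) mu q k))
     {M \<in> space (PiM {..<s} (\<lambda>_. bag_oracle (\<lambda>x. pos (dotp d rs x)) mu q k)).
       (bag_err_sample (\<lambda>x. pos (dotp d rh x)) q k s M \<le> bag_err_sample (\<lambda>x. pos (- dotp d rh x)) q k s M \<longrightarrow>
          measure mu {x \<in> space mu. pos (dotp d rh x) \<noteq> pos (dotp d rs x)}
            \<le> 16 * c0 * real q * \<epsilon> * sqrt (lmax / lmin)) \<and>
       (bag_err_sample (\<lambda>x. pos (- dotp d rh x)) q k s M \<le> bag_err_sample (\<lambda>x. pos (dotp d rh x)) q k s M \<longrightarrow>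
          measure mu {x \<in> space mu. pos (- dotp d rh x) \<noteq> pos (dotp d rs x)}
            \<le> 16 * c0 * real q * \<epsilon> * sqrt (lmax / lmin))}"
proof -
  have "1 \<le> d" using rs by (cases d) (simp_all add: vnorm_def)
  have s': "(1/4)^s \<le> \<delta>/2"
    using sample_size_bound[OF \<open>1 \<le> C\<close> \<open>1 \<le> d\<close> \<open>2 \<le> q\<close> \<open>0 < \<epsilon>\<close> \<open>\<epsilon> < 1\<close> \<open>0 < \<delta>\<close> \<open>\<delta> < 1\<close> s] .
  have "0 < lmin" "lmin \<le> lmax" using eigenvalue_pos_if_posdef[OF pd evmin] emin evmax by auto
  then have bound: "384 * real q * \<epsilon> * sqrt (lmax / lmin) \<le> 16 * c0 * real q * \<epsilon> * sqrt (lmax / lmin)"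
    using \<open>24 \<le> c0\<close> \<open>0 < \<epsilon>\<close> by (intro mult_right_mono) auto
  note close_bound = bag_selection_bound_if_close[OF sym pd emax evmin emin g rs _ _ kq kh \<open>0 < \<epsilon>\<close> bound s']
  show ?thesis
  proof (cases "vnorm d (\<lambda>i. rh i - rs i) \<le> \<epsilon>")
    case True
    then have "vnorm d (\<lambda>i. rs i - rh i) \<le> \<epsilon>" using vnorm_diff_commute[of d rs rh] by simp
    then show ?thesis by (rule close_bound[OF rh])
  next
    case False
    then have "vnorm d (\<lambda>i. rs i - (- rh i)) \<le> \<epsilon>" using close by (simp add: add.commute)
    moreover have "vnorm d (\<lambda>i. - rh i) = 1" using rh by (simp add: vnorm_def)
    ultimately show ?thesis
      using close_bound[of "\<lambda>i. - rh i"] by (simp add: dotp_minus conj_commute)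
  qed
qed

theorem lemma5:
  shows "\<exists>C c0 :: real. C > 0 \<and> c0 > 0 \<and>
   (\<forall>(d::nat) (S::nat \<Rightarrow> nat \<Rightarrow> real) (lmax::real) (lmin::real) (rs::nat \<Rightarrow> real)
      (q::nat) (k::nat) (\<epsilon>::real) (\<delta>::real) (rh::nat \<Rightarrow> real) (s::nat)
      (mu::(nat \<Rightarrow> real) measure).
     sym_mat d S \<and> posdef d S \<and>
     is_eigenvalue d S lmax \<and> (\<forall>l. is_eigenvalue d S l \<longrightarrow> l \<le> lmax) \<and>
     is_eigenvalue d S lmin \<and> (\<forall>l. is_eigenvalue d S l \<longrightarrow> lmin \<le> l) \<and>
     gaussian d S mu \<and>
     vnorm d rs = 1 \<and> 2 \<le> q \<and> 1 \<le> k \<and> k \<le> q - 1 \<and> 2 * k \<noteq> q \<and>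
     0 < \<epsilon> \<and> \<epsilon> < 1 \<and> 0 < \<delta> \<and> \<delta> < 1 \<and>
     vnorm d rh = 1 \<and>
     min (vnorm d (\<lambda>i. rh i - rs i)) (vnorm d (\<lambda>i. rh i + rs i)) \<le> \<epsilon> \<and>
     real s \<ge> C * real d * (ln (real q) + ln (1 / \<delta>)) / \<epsilon>\<^sup>2
     \<longrightarrow>
     (let f = (\<lambda>x. pos (dotp d rs x));
          h = (\<lambda>x. pos (dotp d rh x));
          ht = (\<lambda>x. pos (- dotp d rh x));
          Bm = PiM {..<s} (\<lambda>_. bag_oracle f mu q k);
          bound = 16 * c0 * real q * \<epsilon> * sqrt (lmax / lmin);
          err = (\<lambda>g. measure mu {x \<in> space mu. g x \<noteq> f x})
      in measure Bm {M \<in> space Bm.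
            (bag_err_sample h q k s M \<le> bag_err_sample ht q k s M \<longrightarrow> err h \<le> bound) \<and>
            (bag_err_sample ht q k s M \<le> bag_err_sample h q k s M \<longrightarrow> err ht \<le> bound)}
         \<ge> 1 - \<delta> / 2))"
  by (intro exI[of _ "1::real"] exI[of _ "24::real"] conjI allI impI, simp_all only: Let_def,
      elim conjE, intro bag_selection_bound[where C = 1]) simp_all

end
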